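(* Let $n\geqslant 3$, let $S$ be a caterpillar species tree with canonical label vector $(s_1,\dots,s_n)$, and let $k_s,k_\ell\in\{1,\dots,n\}$ with $k_s<k_\ell$ and $k_\ell\neq 2$. Let $G$ be the caterpillar gene tree with canonical label vector $(g_1,\dots,g_n)$ given by $g_{k_s}=s_{k_\ell}$, $g_k=s_{k-1}$ for $k_s<k\leqslant k_\ell$, and $g_k=s_k$ for $k\notin\{k_s,\dots,k_\ell\}$ (a forward incrementation of $S$ on the component $k_s,\dots,k_\ell$). Writing $\delta=\delta_{k_s,1}$ (equal to $1$ if $k_s=1$ and $0$ otherwise), the number of coalescent histories for $(G,S)$ equals $$\sum_{c=0}^{\min(k_s-2+\delta,\ n-k_\ell)} D(k_\ell-1+c,\ k_s-2+\delta-c)\; D_{k_\ell-k_s-\delta+2+2c}\big(n-k_\ell-c,\ n-k_s+1-\delta+c\big).$$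
   Context: All trees are binary, rooted, leaf-labeled. A caterpillar tree with $n$ leaves is one in which some internal node is descended from all other internal nodes. Its canonical label vector $(x_1,\dots,x_n)$ has $x_1,x_2$ the labels of the two cherry leaves and, for $3\leqslant i\leqslant n$, $x_i$ the label of the leaf separated from the root by $n-i+1$ edges. Internal nodes are numbered $1,\dots,n-1$ from cherry to root; internal edge $i$ is the edge above node $i$, with an extra edge $n-1$ above the root. A coalescent history for $(G,S)$ is a map $h$ from internal nodes of $G$ to internal edges of $S$ such that (1) every label of a leaf below node $v$ of $G$ labels a leaf of $S$ below edge $h(v)$, and (2) if $v_2$ is descended from $v_1$ in $G$ then $h(v_2)$ is descended from $h(v_1)$ (objects are descended from themselves). Catalan's triangle: $D(a,b)=1$ if $b=0$, $D(a,b)=\binom{a+b}{b}-\binom{a+b}{b-1}$ if $1\leqslant b\leqslant a$, and $D(a,b)=0$ if $b>a$ (the number of monotonic lattice paths from $(0,0)$ to $(a,b)$ with steps $(1,0),(0,1)$ never going above $y=x$). Catalan's trapezoid of order $m\geqslant1$: $D_m(a,b)=\binom{a+b}{b}$ if $0\leqslant b<m$, $D_m(a,b)=\binom{a+b}{b}-\binom{a+b}{b-m}$ if $m\leqslant b\leqslant a+m-1$, and $D_m(a,b)=0$ if $b>a+m-1$ (the number of such paths from $(0,0)$ to $(a,b)$ never going above $y=x+m-1$). *)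

theory Defs
  imports Main "HOL-Library.Sublist" "HOL-Library.FuncSet"
begin

datatype 'a tree = Leaf 'a | Node "'a tree" "'a tree"

fun leaves :: "'a tree \<Rightarrow> 'a set" where
  "leaves (Leaf a) = {a}"
| "leaves (Node l r) = leaves l \<union> leaves r"

fun subt :: "'a tree \<Rightarrow> bool list \<Rightarrow> 'a tree option" where
  "subt t [] = Some t"
| "subt (Node l r) (False # p) = subt l p"
| "subt (Node l r) (True # p) = subt r p"
| "subt (Leaf a) (b # p) = None"

definition internal :: "'a tree \<Rightarrow> bool list set" where
  "internal t = {p. \<exists>l r. subt t p = Some (Node l r)}"

text \<open>Labels of the leaves below a node (equivalently: below the edge above that node).\<close>
definition leaves_at :: "'a tree \<Rightarrow> bool list \<Rightarrow> 'a set" where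
  "leaves_at t p = (case subt t p of Some u \<Rightarrow> leaves u | None \<Rightarrow> {})"

text \<open>Internal edges of S are identified with the internal node directly below them
  (the root edge with the root). Node/edge q is descended from p iff p is a prefix of q.\<close>
definition coal_hist :: "'a tree \<Rightarrow> 'a tree \<Rightarrow> (bool list \<Rightarrow> bool list) \<Rightarrow> bool" where
  "coal_hist G S h \<longleftrightarrow>
     (\<forall>v\<in>internal G. h v \<in> internal S \<and> leaves_at G v \<subseteq> leaves_at S (h v)) \<and>
     (\<forall>v1\<in>internal G. \<forall>v2\<in>internal G. prefix v1 v2 \<longrightarrow> prefix (h v1) (h v2))"

definition num_coal_hist :: "'a tree \<Rightarrow> 'a tree \<Rightarrow> nat" where
  "num_coal_hist G S = card {h. h \<in> internal G \<rightarrow>\<^sub>E internal S \<and> coal_hist G S h}"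

text \<open>Caterpillar with canonical label vector [x1, x2, ..., xn]:
  cherry (x1,x2), then x3, ..., xn attached successively towards the root.\<close>
fun caterpillar :: "'a list \<Rightarrow> 'a tree" where
  "caterpillar (x1 # x2 # rest) = foldl (\<lambda>t y. Node t (Leaf y)) (Node (Leaf x1) (Leaf x2)) rest"
| "caterpillar [x] = Leaf x"
| "caterpillar [] = undefined"

section \<open>Catalan triangle and trapezoid\<close>

definition catD :: "nat \<Rightarrow> nat \<Rightarrow> int" where
  "catD a b = (if b = 0 then 1
     else if b \<le> a then int ((a + b) choose b) - int ((a + b) choose (b - 1))
     else 0)"

definition catDm :: "nat \<Rightarrow> nat \<Rightarrow> nat \<Rightarrow> int" where
  "catDm m a b = (if b < m then int ((a + b) choose b)
     else if b \<le> a + m - 1 then int ((a + b) choose b) - int ((a + b) choose (b - m))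
     else 0)"

end

theory Submission
  imports Defs
begin

text \<open>A coalescent history of two caterpillars with \<open>n\<close> leaves sends node \<open>j\<close> of the gene tree
  (counted from the cherry) to the edge above node \<open>\<phi> j\<close> of the species tree; it is a history
  exactly when \<open>\<phi>\<close> is non-decreasing and \<open>\<phi> j \<ge> m j\<close>, where \<open>m j\<close> is the lowest node of the
  species tree whose clade contains the leaves below node \<open>j\<close>. Reading \<open>\<phi>\<close> as a lattice path
  whose \<open>j\<close>-th up-step is taken at abscissa \<open>\<phi> j\<close>, histories become monotone paths from \<open>(0, 0)\<close> to \<open>(n - 1, n - 1)\<close>
  that stay to the right of the staircase \<open>m\<close>. For a forward incrementation \<open>m\<close> is the diagonal,
  except for a plateau at abscissa \<open>kl - 1\<close> over the rows \<open>ks - 1 + \<delta> .. kl - 1\<close>. Cutting a path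
  where it crosses the antidiagonal through \<open>(kl - 1, ks - 2 + \<delta>)\<close> splits it into a path below
  the diagonal, counted by Catalan's triangle, and a path below a shifted diagonal, counted by
  Catalan's trapezoid.\<close>

section \<open>Counting lattice paths\<close>

function lattice_paths :: "(nat \<Rightarrow> nat \<Rightarrow> bool) \<Rightarrow> nat \<Rightarrow> nat \<Rightarrow> nat \<Rightarrow> nat \<Rightarrow> nat" where
  "lattice_paths ok x0 y0 x y =
    (if \<not> ok x y \<or> x < x0 \<or> y < y0 then 0
     else if x = x0 \<and> y = y0 then 1
     else (if x0 < x then lattice_paths ok x0 y0 (x - 1) y else 0)
        + (if y0 < y then lattice_paths ok x0 y0 x (y - 1) else 0))"
  by auto
termination by (relation "measure (\<lambda>(ok, x0, y0, x, y). x + y)") auto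

declare lattice_paths.simps [simp del]

lemma lattice_paths_eq_0: "\<not> ok x y \<or> x < x0 \<or> y < y0 \<Longrightarrow> lattice_paths ok x0 y0 x y = 0"
  by (subst lattice_paths.simps) auto

lemma lattice_paths_refl: "ok x y \<Longrightarrow> lattice_paths ok x y x y = 1"
  by (subst lattice_paths.simps) auto

lemma lattice_paths_rec:
  "ok x y \<Longrightarrow> x0 \<le> x \<Longrightarrow> y0 \<le> y \<Longrightarrow> x0 + y0 < x + y \<Longrightarrow>
   lattice_paths ok x0 y0 x y =
     (if x0 < x then lattice_paths ok x0 y0 (x - 1) y else 0)
   + (if y0 < y then lattice_paths ok x0 y0 x (y - 1) else 0)"
  by (subst lattice_paths.simps) auto

lemma lattice_paths_cong:
  "(\<And>x y. x0 \<le> x \<Longrightarrow> x \<le> X \<Longrightarrow> y0 \<le> y \<Longrightarrow> y \<le> Y \<Longrightarrow> ok x y = ok' x y)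
   \<Longrightarrow> lattice_paths ok x0 y0 X Y = lattice_paths ok' x0 y0 X Y"
proof (induction ok x0 y0 X Y rule: lattice_paths.induct)
  case (1 ok x0 y0 x y)
  show ?case
    by (subst (1 2) lattice_paths.simps) (use 1 in \<open>auto simp del: One_nat_def\<close>)
qed

lemma lattice_paths_shift:
  "x0 \<le> X \<Longrightarrow> y0 \<le> Y \<Longrightarrow>
   lattice_paths ok x0 y0 X Y = lattice_paths (\<lambda>x y. ok (x + x0) (y + y0)) 0 0 (X - x0) (Y - y0)"
proof (induction ok x0 y0 X Y rule: lattice_paths.induct)
  case (1 ok x0 y0 x y)
  show ?case
    by (subst (1 2) lattice_paths.simps) (use 1 in \<open>auto simp del: One_nat_def simp: ac_simps\<close>)
qed

lemma lattice_paths_rec_antidiagonal: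
  assumes "i \<le> d" "d < X + Y" "ok X Y"
  shows "lattice_paths ok i (d - i) X Y =
      (if 0 < X then lattice_paths ok i (d - i) (X - 1) Y else 0)
    + (if 0 < Y then lattice_paths ok i (d - i) X (Y - 1) else 0)"
proof (cases "X < i \<or> Y < d - i")
  case True
  then have "lattice_paths ok i (d - i) X Y = 0" "lattice_paths ok i (d - i) (X - 1) Y = 0"
    "lattice_paths ok i (d - i) X (Y - 1) = 0"
    by (auto intro!: lattice_paths_eq_0)
  then show ?thesis by (simp only:) simp
next
  case False
  then have rec: "lattice_paths ok i (d - i) X Y =
      (if i < X then lattice_paths ok i (d - i) (X - 1) Y else 0)
    + (if d - i < Y then lattice_paths ok i (d - i) X (Y - 1) else 0)"
    using assms by (intro lattice_paths_rec) auto
  show ?thesis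
    unfolding rec using False
    by (cases "X = i"; cases "Y = d - i") (auto intro!: lattice_paths_eq_0)
qed

lemma lattice_paths_antidiagonal:
  "d \<le> X + Y \<Longrightarrow> lattice_paths ok 0 0 X Y =
     (\<Sum>i\<le>d. lattice_paths ok 0 0 i (d - i) * lattice_paths ok i (d - i) X Y)"
proof (induction "X + Y" arbitrary: X Y rule: less_induct)
  case less
  show ?case
  proof (cases "X + Y = d")
    case True
    have "lattice_paths ok 0 0 i (d - i) * lattice_paths ok i (d - i) X Y
        = (if i = X then lattice_paths ok 0 0 X Y else 0)" for i
      using True by (cases "ok X Y") (auto simp: lattice_paths_refl intro!: lattice_paths_eq_0)
    with True show ?thesis by simp
  next
    case False
    with less.prems have beyond: "d < X + Y" by simp
    show ?thesis
    proof (cases "ok X Y")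
      case False
      then show ?thesis by (auto simp: lattice_paths_eq_0)
    next
      case True
      let ?P = "\<lambda>x y. lattice_paths ok 0 0 x y"
      let ?Q = "\<lambda>i x y. lattice_paths ok i (d - i) x y"
      have "?P X Y = (if 0 < X then ?P (X - 1) Y else 0) + (if 0 < Y then ?P X (Y - 1) else 0)"
        using True beyond by (intro lattice_paths_rec) auto
      also have "\<dots> = (\<Sum>i\<le>d. ?P i (d - i) * (if 0 < X then ?Q i (X - 1) Y else 0))
          + (\<Sum>i\<le>d. ?P i (d - i) * (if 0 < Y then ?Q i X (Y - 1) else 0))"
        using less.hyps beyond by auto
      also have "\<dots> = (\<Sum>i\<le>d. ?P i (d - i) * ?Q i X Y)"
        unfolding sum.distrib[symmetric]
        by (intro sum.cong refl)
          (simp add: lattice_paths_rec_antidiagonal[of _ d X Y ok, OF _ beyond True] distrib_left)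
      finally show ?thesis .
    qed
  qed
qed

definition choose_int :: "nat \<Rightarrow> int \<Rightarrow> int" where
  "choose_int n k = (if k < 0 then 0 else int (n choose nat k))"

lemma choose_int_Suc: "choose_int (Suc n) k = choose_int n (k - 1) + choose_int n k"
proof -
  consider "k < 0" | "k = 0" | "k > 0" by linarith
  then show ?thesis
  proof cases
    case 3
    then obtain j where j: "nat k = Suc j" by (metis gr0_implies_Suc zero_less_nat_eq)
    then have "nat (k - 1) = j" by linarith
    with 3 j show ?thesis by (simp add: choose_int_def)
  qed (auto simp: choose_int_def)
qed

lemma choose_int_symmetric: "choose_int (a + b) (int b) = choose_int (a + b) (int a)"
  by (simp add: choose_int_def binomial_symmetric[of b "a + b"])

lemma catDm_Suc_eq_choose_int:
  "b \<le> a + k \<Longrightarrow>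
   catDm (Suc k) a b = choose_int (a + b) (int b) - choose_int (a + b) (int b - int k - 1)"
  by (cases "b < Suc k") (auto simp: catDm_def choose_int_def nat_diff_distrib)

lemma catDm_Suc_pascal:
  assumes "0 < a" "0 < b" "b \<le> a + k"
  shows "catDm (Suc k) a b = catDm (Suc k) (a - 1) b + catDm (Suc k) a (b - 1)"
proof -
  define M where "M = a + b - 1"
  define C where "C j = choose_int M j" for j
  have "a + b = Suc M" using assms by (simp add: M_def)
  with assms have "catDm (Suc k) a b = choose_int (Suc M) (int b) - choose_int (Suc M) (int b - int k - 1)"
    by (simp add: catDm_Suc_eq_choose_int)
  then have "catDm (Suc k) a b = C (int b - 1) + C (int b) - (C (int b - int k - 2) + C (int b - int k - 1))"
    by (simp add: choose_int_Suc C_def algebra_simps)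
  moreover have "catDm (Suc k) a (b - 1) = C (int b - 1) - C (int b - int k - 2)"
    using assms by (simp add: catDm_Suc_eq_choose_int C_def M_def of_nat_diff)
  moreover have "catDm (Suc k) (a - 1) b = C (int b) - C (int b - int k - 1)"
  proof (cases "b \<le> a - 1 + k")
    case True
    with assms show ?thesis by (simp add: catDm_Suc_eq_choose_int C_def M_def)
  next
    case False
    \<comment> \<open>On the boundary \<open>b = a + k\<close> both sides vanish, the right one by the symmetry of binomials.\<close>
    then have "catDm (Suc k) (a - 1) b = 0" by (simp add: catDm_def)
    moreover have "M = a - 1 + b" "int b - int k - 1 = int (a - 1)"
      using False assms by (auto simp: M_def)
    ultimately show ?thesis
      using choose_int_symmetric[of "a - 1" b] by (simp add: C_def)
  qed
  ultimately show ?thesis by simp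
qed

lemma catDm_Suc_rec:
  assumes "b \<le> a + k" "0 < a + b"
  shows "catDm (Suc k) a b =
      (if 0 < a then catDm (Suc k) (a - 1) b else 0) + (if 0 < b then catDm (Suc k) a (b - 1) else 0)"
proof -
  consider "a = 0" | "b = 0" | "0 < a" "0 < b" by auto
  then show ?thesis
  proof cases
    case 1
    with assms have "catDm (Suc k) 0 b = 1" "catDm (Suc k) 0 (b - 1) = 1"
      by (simp_all add: catDm_def)
    with 1 assms show ?thesis by simp
  next
    case 2
    with assms have "catDm (Suc k) a 0 = 1" "catDm (Suc k) (a - 1) 0 = 1"
      by (simp_all add: catDm_def)
    with 2 assms show ?thesis by simp
  qed (use assms catDm_Suc_pascal in simp)
qed

theorem lattice_paths_below_line:
  "int (lattice_paths (\<lambda>x y. y \<le> x + k) 0 0 a b) = catDm (Suc k) a b"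
proof (induction "a + b" arbitrary: a b rule: less_induct)
  case less
  show ?case
  proof (cases "b \<le> a + k")
    case False
    then show ?thesis by (simp add: lattice_paths_eq_0 catDm_def)
  next
    case True
    show ?thesis
    proof (cases "a + b = 0")
      case True
      then show ?thesis by (simp add: lattice_paths_refl catDm_def)
    next
      case False
      with \<open>b \<le> a + k\<close> have "lattice_paths (\<lambda>x y. y \<le> x + k) 0 0 a b =
          (if 0 < a then lattice_paths (\<lambda>x y. y \<le> x + k) 0 0 (a - 1) b else 0)
        + (if 0 < b then lattice_paths (\<lambda>x y. y \<le> x + k) 0 0 a (b - 1) else 0)"
        by (intro lattice_paths_rec) auto
      moreover have "catDm (Suc k) a b =
          (if 0 < a then catDm (Suc k) (a - 1) b else 0) + (if 0 < b then catDm (Suc k) a (b - 1) else 0)"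
        using False \<open>b \<le> a + k\<close> by (intro catDm_Suc_rec) auto
      ultimately show ?thesis
        using less.hyps False by simp
    qed
  qed
qed

corollary lattice_paths_below_diagonal:
  "int (lattice_paths (\<lambda>x y. y \<le> x) 0 0 a b) = catD a b"
  using lattice_paths_below_line[of 0 a b] by (simp add: catD_def catDm_def)

lemma lattice_paths_plateau_term:
  fixes a L N c :: nat
  assumes "1 \<le> a" "a \<le> L" "c \<le> a - 1" "c \<le> N - L" "L \<le> N"
  defines "ok \<equiv> \<lambda>x y. if a \<le> y \<and> y \<le> L then L \<le> x else y \<le> x"
  shows "int (lattice_paths ok 0 0 (L + c) (a - 1 - c) * lattice_paths ok (L + c) (a - 1 - c) N N) =
    catD (L + c) (a - 1 - c) * catDm (L + 2 * c + 2 - a) (N - L - c) (N + 1 + c - a)"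
proof -
  have "lattice_paths ok 0 0 (L + c) (a - 1 - c) = lattice_paths (\<lambda>x y. y \<le> x) 0 0 (L + c) (a - 1 - c)"
    using assms by (intro lattice_paths_cong) (auto simp: ok_def)
  then have below: "int (lattice_paths ok 0 0 (L + c) (a - 1 - c)) = catD (L + c) (a - 1 - c)"
    by (simp add: lattice_paths_below_diagonal)
  have "lattice_paths ok (L + c) (a - 1 - c) N N = lattice_paths (\<lambda>x y. y \<le> x) (L + c) (a - 1 - c) N N"
    using assms by (intro lattice_paths_cong) (auto simp: ok_def)
  also have "\<dots> = lattice_paths (\<lambda>x y. y + (a - 1 - c) \<le> x + (L + c)) 0 0 (N - L - c) (N + 1 + c - a)"
    using assms by (subst lattice_paths_shift) (auto simp: algebra_simps)
  also have "(\<lambda>x y. y + (a - 1 - c) \<le> x + (L + c)) = (\<lambda>x y. y \<le> x + (L + 2 * c + 1 - a))"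
    using assms by (auto simp: fun_eq_iff)
  finally have "int (lattice_paths ok (L + c) (a - 1 - c) N N) =
      catDm (Suc (L + 2 * c + 1 - a)) (N - L - c) (N + 1 + c - a)"
    by (simp add: lattice_paths_below_line)
  with below assms show ?thesis by (simp add: Suc_diff_le)
qed

text \<open>Every path crosses the antidiagonal \<open>x + y = L + a - 1\<close> exactly once, and the only crossing
  points it can use are \<open>(L + c, a - 1 - c)\<close>: to the left of \<open>x = L\<close> the antidiagonal runs through
  the forbidden rows \<open>a..L\<close> or above the diagonal.\<close>
lemma lattice_paths_plateau_crossings:
  fixes a L N :: nat
  assumes "1 \<le> a" "a \<le> L" "L \<le> N"
  defines "ok \<equiv> \<lambda>x y. if a \<le> y \<and> y \<le> L then L \<le> x else y \<le> x"
  shows "lattice_paths ok 0 0 N N = (\<Sum>c = 0..min (a - 1) (N - L).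
    lattice_paths ok 0 0 (L + c) (a - 1 - c) * lattice_paths ok (L + c) (a - 1 - c) N N)"
proof -
  define d where "d = L + a - 1"
  define M where "M = min (a - 1) (N - L)"
  define F where "F i = lattice_paths ok 0 0 i (d - i) * lattice_paths ok i (d - i) N N" for i
  have "lattice_paths ok 0 0 N N = (\<Sum>i\<le>d. F i)"
    using assms unfolding F_def d_def by (intro lattice_paths_antidiagonal) auto
  also have "\<dots> = (\<Sum>i\<in>{L..L+M}. F i)"
  proof (rule sum.mono_neutral_right)
    show "{L..L+M} \<subseteq> {..d}" using assms by (auto simp: M_def d_def)
    show "\<forall>i\<in>{..d} - {L..L+M}. F i = 0"
    proof
      fix i assume i: "i \<in> {..d} - {L..L+M}"
      show "F i = 0"
      proof (cases "i < L")
        case True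
        with assms have "\<not> ok i (d - i)" by (auto simp: ok_def d_def)
        then show ?thesis by (simp add: F_def lattice_paths_eq_0)
      next
        case False
        with i assms have "N < i" by (auto simp: M_def d_def)
        then show ?thesis by (simp add: F_def lattice_paths_eq_0)
      qed
    qed
  qed simp
  also have "\<dots> = (\<Sum>c = 0..M. F (L + c))"
    using sum.shift_bounds_cl_nat_ivl[of F 0 L M] by (simp add: add.commute)
  also have "\<dots> = (\<Sum>c = 0..M.
      lattice_paths ok 0 0 (L + c) (a - 1 - c) * lattice_paths ok (L + c) (a - 1 - c) N N)"
    by (intro sum.cong refl) (simp add: F_def d_def)
  finally show ?thesis unfolding M_def .
qed

theorem lattice_paths_plateau:
  fixes a L N :: nat
  assumes "1 \<le> a" "a \<le> L" "L \<le> N"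
  defines "ok \<equiv> \<lambda>x y. if a \<le> y \<and> y \<le> L then L \<le> x else y \<le> x"
  shows "int (lattice_paths ok 0 0 N N) =
    (\<Sum>c = 0..min (a - 1) (N - L).
       catD (L + c) (a - 1 - c) * catDm (L + 2 * c + 2 - a) (N - L - c) (N + 1 + c - a))"
  unfolding ok_def lattice_paths_plateau_crossings[OF assms(1-3)] of_nat_sum
  using assms by (intro sum.cong refl lattice_paths_plateau_term) auto

section \<open>Non-decreasing sequences with lower bounds\<close>

definition mono_bounded_seqs :: "(nat \<Rightarrow> nat) \<Rightarrow> nat \<Rightarrow> nat \<Rightarrow> (nat \<Rightarrow> nat) set" where
  "mono_bounded_seqs m j x = {\<phi> \<in> {1..j} \<rightarrow>\<^sub>E {..x}. (\<forall>i\<in>{1..j}. m i \<le> \<phi> i) \<and>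
     (\<forall>i\<in>{1..j}. \<forall>i'\<in>{1..j}. i \<le> i' \<longrightarrow> \<phi> i \<le> \<phi> i')}"

lemma finite_mono_bounded_seqs: "finite (mono_bounded_seqs m j x)"
  by (rule finite_subset[of _ "{1..j} \<rightarrow>\<^sub>E {..x}"])
    (auto simp: mono_bounded_seqs_def intro: finite_PiE)

lemma mono_bounded_seqs_0: "mono_bounded_seqs m 0 x = {\<lambda>_. undefined}"
  by (auto simp: mono_bounded_seqs_def)

lemma mono_bounded_seqs_last_less:
  "0 < x \<Longrightarrow> {\<phi> \<in> mono_bounded_seqs m (Suc j) x. \<phi> (Suc j) < x} = mono_bounded_seqs m (Suc j) (x - 1)"
proof (intro equalityI subsetI)
  fix \<phi> assume \<phi>: "\<phi> \<in> {\<phi> \<in> mono_bounded_seqs m (Suc j) x. \<phi> (Suc j) < x}"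
  then have "\<forall>i\<in>{1..Suc j}. \<phi> i \<le> \<phi> (Suc j)" by (auto simp: mono_bounded_seqs_def)
  with \<phi> show "\<phi> \<in> mono_bounded_seqs m (Suc j) (x - 1)"
    by (fastforce simp: mono_bounded_seqs_def PiE_iff)
next
  fix \<phi> assume "0 < x" and \<phi>: "\<phi> \<in> mono_bounded_seqs m (Suc j) (x - 1)"
  have "mono_bounded_seqs m (Suc j) (x - 1) \<subseteq> mono_bounded_seqs m (Suc j) x"
    by (auto simp: mono_bounded_seqs_def PiE_iff)
  moreover have "\<phi> (Suc j) \<le> x - 1"
    using \<phi> by (auto simp: mono_bounded_seqs_def PiE_iff)
  ultimately show "\<phi> \<in> {\<phi> \<in> mono_bounded_seqs m (Suc j) x. \<phi> (Suc j) < x}"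
    using \<phi> \<open>0 < x\<close> by auto
qed

lemma mono_bounded_seqs_last_eq:
  "m (Suc j) \<le> x \<Longrightarrow>
   {\<phi> \<in> mono_bounded_seqs m (Suc j) x. \<phi> (Suc j) = x} = (\<lambda>\<phi>. \<phi>(Suc j := x)) ` mono_bounded_seqs m j x"
proof (intro equalityI subsetI)
  fix \<phi> assume \<phi>: "\<phi> \<in> {\<phi> \<in> mono_bounded_seqs m (Suc j) x. \<phi> (Suc j) = x}"
  then have "\<phi> = (\<phi>(Suc j := undefined))(Suc j := x)" by auto
  moreover have "\<phi>(Suc j := undefined) \<in> mono_bounded_seqs m j x"
    using \<phi> by (auto simp: mono_bounded_seqs_def PiE_iff extensional_def)
  ultimately show "\<phi> \<in> (\<lambda>\<phi>. \<phi>(Suc j := x)) ` mono_bounded_seqs m j x" by blast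
next
  fix \<phi> assume m: "m (Suc j) \<le> x" and "\<phi> \<in> (\<lambda>\<phi>. \<phi>(Suc j := x)) ` mono_bounded_seqs m j x"
  then obtain \<psi> where \<psi>: "\<psi> \<in> mono_bounded_seqs m j x" and \<phi>: "\<phi> = \<psi>(Suc j := x)" by blast
  have "\<phi> \<in> mono_bounded_seqs m (Suc j) x"
    unfolding mono_bounded_seqs_def
  proof (intro CollectI conjI)
    show "\<phi> \<in> {1..Suc j} \<rightarrow>\<^sub>E {..x}"
      using \<psi> \<phi> by (auto simp: mono_bounded_seqs_def PiE_iff extensional_def)
    show "\<forall>i\<in>{1..Suc j}. m i \<le> \<phi> i"
      using \<psi> \<phi> m by (auto simp: mono_bounded_seqs_def le_Suc_eq)
    show "\<forall>i\<in>{1..Suc j}. \<forall>i'\<in>{1..Suc j}. i \<le> i' \<longrightarrow> \<phi> i \<le> \<phi> i'"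
      using \<psi> \<phi> by (auto simp: mono_bounded_seqs_def PiE_iff le_Suc_eq)
  qed
  then show "\<phi> \<in> {\<phi> \<in> mono_bounded_seqs m (Suc j) x. \<phi> (Suc j) = x}"
    using \<phi> by auto
qed

lemma inj_on_fun_upd_mono_bounded_seqs: "inj_on (\<lambda>\<phi>. \<phi>(Suc j := x)) (mono_bounded_seqs m j y)"
proof (rule inj_onI)
  fix \<phi> \<psi> assume "\<phi> \<in> mono_bounded_seqs m j y" "\<psi> \<in> mono_bounded_seqs m j y"
    and eq: "\<phi>(Suc j := x) = \<psi>(Suc j := x)"
  then have "\<phi> (Suc j) = \<psi> (Suc j)" by (auto simp: mono_bounded_seqs_def PiE_iff extensional_def)
  then show "\<phi> = \<psi>"
    using eq by (metis fun_upd_idem_iff fun_upd_upd)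
qed

lemma mono_bounded_seqs_empty:
  assumes "x < m (Suc j)"
  shows "mono_bounded_seqs m (Suc j) x = {}"
proof -
  have "m (Suc j) \<le> \<phi> (Suc j) \<and> \<phi> (Suc j) \<le> x" if "\<phi> \<in> mono_bounded_seqs m (Suc j) x" for \<phi>
    using that by (auto simp: mono_bounded_seqs_def PiE_iff)
  with assms show ?thesis by fastforce
qed

lemma card_mono_bounded_seqs_Suc:
  assumes "m (Suc j) \<le> x"
  shows "card (mono_bounded_seqs m (Suc j) x) =
    (if 0 < x then card (mono_bounded_seqs m (Suc j) (x - 1)) else 0) + card (mono_bounded_seqs m j x)"
proof -
  let ?last_less = "{\<phi> \<in> mono_bounded_seqs m (Suc j) x. \<phi> (Suc j) < x}"
  let ?last_eq = "(\<lambda>\<phi>. \<phi>(Suc j := x)) ` mono_bounded_seqs m j x"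
  have "\<phi> (Suc j) \<le> x" if "\<phi> \<in> mono_bounded_seqs m (Suc j) x" for \<phi>
    using that by (auto simp: mono_bounded_seqs_def PiE_iff)
  then have split: "mono_bounded_seqs m (Suc j) x = ?last_less \<union> ?last_eq"
    unfolding mono_bounded_seqs_last_eq[of m j x, OF assms, symmetric] by fastforce
  have "card (?last_less \<union> ?last_eq) = card ?last_less + card ?last_eq"
    by (rule card_Un_disjoint) (auto simp: finite_mono_bounded_seqs)
  then have "card (mono_bounded_seqs m (Suc j) x) = card ?last_less + card ?last_eq"
    by (metis split)
  moreover have "card ?last_eq = card (mono_bounded_seqs m j x)"
    by (rule card_image[OF inj_on_fun_upd_mono_bounded_seqs])
  moreover have "?last_less = (if 0 < x then mono_bounded_seqs m (Suc j) (x - 1) else {})"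
    by (simp add: mono_bounded_seqs_last_less)
  ultimately show ?thesis by simp
qed

text \<open>The \<open>i\<close>-th up-step of the path is taken at abscissa \<open>\<phi> i\<close>.\<close>
theorem card_mono_bounded_seqs:
  "card (mono_bounded_seqs m j x) = lattice_paths (\<lambda>x y. y = 0 \<or> m y \<le> x) 0 0 x j"
proof (induction j arbitrary: x)
  case 0
  show ?case
  proof (induction x)
    case (Suc x)
    have "lattice_paths (\<lambda>x y. y = 0 \<or> m y \<le> x) 0 0 (Suc x) 0 =
        lattice_paths (\<lambda>x y. y = 0 \<or> m y \<le> x) 0 0 x 0"
      by (subst lattice_paths_rec) auto
    with Suc show ?case by (simp add: mono_bounded_seqs_0)
  qed (simp add: mono_bounded_seqs_0 lattice_paths_refl)
next
  case (Suc j)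
  let ?ok = "\<lambda>x y. y = 0 \<or> m y \<le> x"
  show ?case
  proof (induction x rule: less_induct)
    case (less x)
    show ?case
    proof (cases "m (Suc j) \<le> x")
      case True
      then have "lattice_paths ?ok 0 0 x (Suc j) =
          (if 0 < x then lattice_paths ?ok 0 0 (x - 1) (Suc j) else 0) + lattice_paths ?ok 0 0 x j"
        by (subst lattice_paths_rec) auto
      with True less.IH Suc.IH show ?thesis by (simp add: card_mono_bounded_seqs_Suc)
    qed (simp add: mono_bounded_seqs_empty lattice_paths_eq_0)
  qed
qed

section \<open>Coalescent histories of caterpillars\<close>

lemma caterpillar_snoc: "xs \<noteq> [] \<Longrightarrow> caterpillar (xs @ [y]) = Node (caterpillar xs) (Leaf y)"
  by (cases xs; cases "tl xs") auto

lemma caterpillar_eq_Node: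
  "2 \<le> length xs \<Longrightarrow> caterpillar xs = Node (caterpillar (butlast xs)) (Leaf (last xs))"
  by (cases xs rule: rev_exhaust) (auto intro!: caterpillar_snoc)

lemma leaves_caterpillar: "xs \<noteq> [] \<Longrightarrow> leaves (caterpillar xs) = set xs"
proof (induction xs rule: rev_induct)
  case (snoc x xs)
  then show ?case by (cases "xs = []") (auto simp: caterpillar_snoc)
qed simp

lemma subt_caterpillar_replicate:
  "i < length xs \<Longrightarrow>
   subt (caterpillar xs) (replicate i False) = Some (caterpillar (take (length xs - i) xs))"
proof (induction xs arbitrary: i rule: rev_induct)
  case (snoc x xs)
  show ?case
  proof (cases i)
    case (Suc i')
    with snoc have "i' < length xs" "xs \<noteq> []" by auto
    with Suc snoc.IH[of i'] show ?thesis by (simp add: caterpillar_snoc)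
  qed simp
qed simp

lemma subt_caterpillar_Node:
  "xs \<noteq> [] \<Longrightarrow> subt (caterpillar xs) p = Some (Node l r) \<Longrightarrow>
   \<exists>i < length xs - 1. p = replicate i False"
proof (induction xs arbitrary: p rule: rev_induct)
  case (snoc x xs)
  show ?case
  proof (cases "xs = []")
    case True
    with snoc.prems show ?thesis by (cases p) auto
  next
    case False
    show ?thesis
    proof (cases p)
      case (Cons b p')
      show ?thesis
      proof (cases b)
        case True
        with snoc.prems Cons False show ?thesis by (cases p') (auto simp: caterpillar_snoc)
      next
        case b: False
        with snoc.prems Cons False have "subt (caterpillar xs) p' = Some (Node l r)"
          by (simp add: caterpillar_snoc)
        with snoc.IH False obtain i where "i < length xs - 1" "p' = replicate i False" by blast
        with Cons b show ?thesis by (intro exI[of _ "Suc i"]) auto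
      qed
    qed (use False in auto)
  qed
qed simp

lemma internal_caterpillar:
  assumes "xs \<noteq> []"
  shows "internal (caterpillar xs) = (\<lambda>i. replicate i False) ` {..<length xs - 1}"
proof (intro equalityI subsetI)
  fix p assume "p \<in> internal (caterpillar xs)"
  with assms subt_caterpillar_Node show "p \<in> (\<lambda>i. replicate i False) ` {..<length xs - 1}"
    unfolding internal_def by blast
next
  fix p assume "p \<in> (\<lambda>i. replicate i False) ` {..<length xs - 1}"
  then obtain i where i: "i < length xs - 1" "p = replicate i False" by auto
  then have "subt (caterpillar xs) p = Some (caterpillar (take (length xs - i) xs))"
    by (simp add: subt_caterpillar_replicate)
  moreover have "2 \<le> length (take (length xs - i) xs)"
    using i by auto
  ultimately show "p \<in> internal (caterpillar xs)"
    unfolding internal_def by (auto simp: caterpillar_eq_Node)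
qed

lemma leaves_at_caterpillar:
  assumes "i < length xs"
  shows "leaves_at (caterpillar xs) (replicate i False) = set (take (length xs - i) xs)"
proof -
  from assms have "take (length xs - i) xs \<noteq> []" by auto
  with assms show ?thesis
    by (simp add: leaves_at_def subt_caterpillar_replicate leaves_caterpillar)
qed

lemma prefix_replicate_iff: "prefix (replicate i a) (replicate j a) \<longleftrightarrow> i \<le> j"
proof
  assume "i \<le> j"
  then have "replicate j a = replicate i a @ replicate (j - i) a"
    by (metis le_add_diff_inverse replicate_add)
  then show "prefix (replicate i a) (replicate j a)" by (rule prefixI)
qed (metis length_replicate prefix_length_le)

text \<open>Internal node \<open>j\<close> of a caterpillar with \<open>n\<close> leaves, numbered from \<open>1\<close> at the cherry to
  \<open>n - 1\<close> at the root; it sits at depth \<open>n - 1 - j\<close>.\<close>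
definition caterpillar_node :: "nat \<Rightarrow> nat \<Rightarrow> bool list" where
  "caterpillar_node n j = replicate (n - 1 - j) False"

lemma length_caterpillar_node [simp]: "length (caterpillar_node n j) = n - 1 - j"
  by (simp add: caterpillar_node_def)

lemma prefix_caterpillar_node_iff:
  "i < n \<Longrightarrow> j < n \<Longrightarrow> prefix (caterpillar_node n i) (caterpillar_node n j) \<longleftrightarrow> j \<le> i"
  by (auto simp: caterpillar_node_def prefix_replicate_iff)

lemma caterpillar_node_eq_iff:
  "i < n \<Longrightarrow> j < n \<Longrightarrow> caterpillar_node n i = caterpillar_node n j \<longleftrightarrow> i = j"
  by (auto simp: caterpillar_node_def)

lemma internal_caterpillar_upt:
  assumes "2 \<le> n"
  shows "internal (caterpillar (map g [1..<n+1])) = caterpillar_node n ` {1..n-1}"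
proof -
  have "(\<lambda>i. replicate i False) ` {..<n - 1} = caterpillar_node n ` {1..n-1}"
  proof (intro equalityI subsetI)
    fix p assume "p \<in> (\<lambda>i. replicate i False) ` {..<n - 1}"
    then obtain i where "i < n - 1" "p = replicate i False" by blast
    then show "p \<in> caterpillar_node n ` {1..n-1}"
      by (intro image_eqI[of _ _ "n - 1 - i"]) (auto simp: caterpillar_node_def)
  qed (auto simp: caterpillar_node_def)
  with assms show ?thesis by (simp add: internal_caterpillar)
qed

lemma leaves_at_caterpillar_node:
  assumes "j < n"
  shows "leaves_at (caterpillar (map g [1..<n+1])) (caterpillar_node n j) = g ` {1..j+1}"
proof -
  have "leaves_at (caterpillar (map g [1..<n+1])) (caterpillar_node n j) =
      set (take (j + 1) (map g [1..<n+1]))"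
    using assms by (simp add: caterpillar_node_def leaves_at_caterpillar)
  also have "\<dots> = g ` set [1..<1 + (j + 1)]"
    using assms by (simp only: take_map take_upt[of 1 "j + 1" "n + 1"] set_map)
  also have "\<dots> = g ` {1..j+1}"
    by (simp del: upt_Suc add: atLeastLessThanSuc_atLeastAtMost)
  finally show ?thesis .
qed

definition caterpillar_map :: "nat \<Rightarrow> (nat \<Rightarrow> nat) \<Rightarrow> bool list \<Rightarrow> bool list" where
  "caterpillar_map n \<phi> =
     restrict (\<lambda>p. caterpillar_node n (\<phi> (n - 1 - length p))) (caterpillar_node n ` {1..n-1})"

lemma caterpillar_map_node:
  "j \<in> {1..n-1} \<Longrightarrow> caterpillar_map n \<phi> (caterpillar_node n j) = caterpillar_node n (\<phi> j)"
  by (auto simp: caterpillar_map_def)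

lemma inj_on_caterpillar_map: "inj_on (caterpillar_map n) ({1..n-1} \<rightarrow>\<^sub>E {1..n-1})"
proof (rule inj_onI)
  fix \<phi> \<psi> assume \<phi>: "\<phi> \<in> {1..n-1} \<rightarrow>\<^sub>E {1..n-1}" and \<psi>: "\<psi> \<in> {1..n-1} \<rightarrow>\<^sub>E {1..n-1}"
    and eq: "caterpillar_map n \<phi> = caterpillar_map n \<psi>"
  have "\<phi> j = \<psi> j" if "j \<in> {1..n-1}" for j
  proof -
    have "caterpillar_node n (\<phi> j) = caterpillar_node n (\<psi> j)"
      using caterpillar_map_node[OF that] eq by metis
    moreover have "\<phi> j < n" "\<psi> j < n"
      using PiE_mem[OF \<phi> that] PiE_mem[OF \<psi> that] by auto
    ultimately show ?thesis by (simp add: caterpillar_node_eq_iff)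
  qed
  with \<phi> \<psi> show "\<phi> = \<psi>" by (intro PiE_ext)
qed

lemma bij_betw_caterpillar_map:
  "bij_betw (caterpillar_map n) ({1..n-1} \<rightarrow>\<^sub>E {1..n-1})
     (caterpillar_node n ` {1..n-1} \<rightarrow>\<^sub>E caterpillar_node n ` {1..n-1})"
proof (rule bij_betw_imageI[OF inj_on_caterpillar_map])
  show "caterpillar_map n ` ({1..n-1} \<rightarrow>\<^sub>E {1..n-1}) =
      caterpillar_node n ` {1..n-1} \<rightarrow>\<^sub>E caterpillar_node n ` {1..n-1}"
  proof (intro equalityI subsetI)
    fix h assume "h \<in> caterpillar_map n ` ({1..n-1} \<rightarrow>\<^sub>E {1..n-1})"
    then show "h \<in> caterpillar_node n ` {1..n-1} \<rightarrow>\<^sub>E caterpillar_node n ` {1..n-1}"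
      by (auto simp: caterpillar_map_def PiE_iff)
  next
    fix h assume h: "h \<in> caterpillar_node n ` {1..n-1} \<rightarrow>\<^sub>E caterpillar_node n ` {1..n-1}"
    define \<phi> where "\<phi> = restrict (\<lambda>j. n - 1 - length (h (caterpillar_node n j))) {1..n-1}"
    have h_node: "h (caterpillar_node n j) = caterpillar_node n (\<phi> j) \<and> \<phi> j \<in> {1..n-1}"
      if "j \<in> {1..n-1}" for j
    proof -
      from that have "h (caterpillar_node n j) \<in> caterpillar_node n ` {1..n-1}"
        by (intro PiE_mem[OF h]) simp
      then obtain t where "t \<in> {1..n-1}" "h (caterpillar_node n j) = caterpillar_node n t"
        by blast
      with that show ?thesis by (auto simp: \<phi>_def)
    qed
    have "caterpillar_map n \<phi> = h"
    proof
      fix p show "caterpillar_map n \<phi> p = h p"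
      proof (cases "p \<in> caterpillar_node n ` {1..n-1}")
        case True
        with h_node show ?thesis by (auto simp: caterpillar_map_node)
      next
        case False
        with h show ?thesis by (auto simp: caterpillar_map_def PiE_iff extensional_def)
      qed
    qed
    moreover have "\<phi> \<in> {1..n-1} \<rightarrow>\<^sub>E {1..n-1}"
      using h_node by (auto simp: \<phi>_def PiE_iff)
    ultimately show "h \<in> caterpillar_map n ` ({1..n-1} \<rightarrow>\<^sub>E {1..n-1})" by blast
  qed
qed

lemma coal_hist_caterpillar_map_iff:
  fixes g s :: "nat \<Rightarrow> 'a"
  assumes "2 \<le> n" "\<phi> \<in> {1..n-1} \<rightarrow> {1..n-1}"
  shows "coal_hist (caterpillar (map g [1..<n+1])) (caterpillar (map s [1..<n+1])) (caterpillar_map n \<phi>)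
    \<longleftrightarrow> (\<forall>j\<in>{1..n-1}. g ` {1..j+1} \<subseteq> s ` {1..\<phi> j + 1}) \<and>
      (\<forall>i\<in>{1..n-1}. \<forall>j\<in>{1..n-1}. i \<le> j \<longrightarrow> \<phi> i \<le> \<phi> j)"
proof -
  define G where "G = caterpillar (map g [1..<n+1])"
  define S where "S = caterpillar (map s [1..<n+1])"
  have internal: "internal G = caterpillar_node n ` {1..n-1}" "internal S = caterpillar_node n ` {1..n-1}"
    unfolding G_def S_def using assms(1) by (simp_all only: internal_caterpillar_upt)
  have leaves: "leaves_at G (caterpillar_node n j) = g ` {1..j+1}"
    "leaves_at S (caterpillar_node n j) = s ` {1..j+1}" if "j < n" for j
    unfolding G_def S_def using that by (simp_all only: leaves_at_caterpillar_node)
  have range: "j < n" "\<phi> j < n" "\<phi> j \<in> {1..n-1}" if "j \<in> {1..n-1}" for j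
    using Pi_mem[OF assms(2) that] that by auto
  have "(\<forall>v\<in>internal G. caterpillar_map n \<phi> v \<in> internal S \<and>
        leaves_at G v \<subseteq> leaves_at S (caterpillar_map n \<phi> v))
    \<longleftrightarrow> (\<forall>j\<in>{1..n-1}. g ` {1..j+1} \<subseteq> s ` {1..\<phi> j + 1})"
    unfolding internal using range by (auto simp: caterpillar_map_node leaves)
  moreover have "(\<forall>v1\<in>internal G. \<forall>v2\<in>internal G.
        prefix v1 v2 \<longrightarrow> prefix (caterpillar_map n \<phi> v1) (caterpillar_map n \<phi> v2))
    \<longleftrightarrow> (\<forall>i\<in>{1..n-1}. \<forall>j\<in>{1..n-1}. i \<le> j \<longrightarrow> \<phi> i \<le> \<phi> j)"
    unfolding internal using range by (auto simp: caterpillar_map_node prefix_caterpillar_node_iff)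
  ultimately show ?thesis
    unfolding coal_hist_def G_def[symmetric] S_def[symmetric] by blast
qed

theorem num_coal_hist_caterpillar:
  fixes g s :: "nat \<Rightarrow> 'a"
  assumes "2 \<le> n"
  shows "num_coal_hist (caterpillar (map g [1..<n+1])) (caterpillar (map s [1..<n+1])) =
    card {\<phi> \<in> {1..n-1} \<rightarrow>\<^sub>E {1..n-1}. (\<forall>j\<in>{1..n-1}. g ` {1..j+1} \<subseteq> s ` {1..\<phi> j + 1}) \<and>
      (\<forall>i\<in>{1..n-1}. \<forall>j\<in>{1..n-1}. i \<le> j \<longrightarrow> \<phi> i \<le> \<phi> j)}"
proof -
  define G where "G = caterpillar (map g [1..<n+1])"
  define S where "S = caterpillar (map s [1..<n+1])"
  have internal: "internal G = caterpillar_node n ` {1..n-1}" "internal S = caterpillar_node n ` {1..n-1}"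
    unfolding G_def S_def using assms by (simp_all only: internal_caterpillar_upt)
  have history_iff: "coal_hist G S (caterpillar_map n \<phi>) \<longleftrightarrow>
      (\<forall>j\<in>{1..n-1}. g ` {1..j+1} \<subseteq> s ` {1..\<phi> j + 1}) \<and>
      (\<forall>i\<in>{1..n-1}. \<forall>j\<in>{1..n-1}. i \<le> j \<longrightarrow> \<phi> i \<le> \<phi> j)"
    if "\<phi> \<in> {1..n-1} \<rightarrow>\<^sub>E {1..n-1}" for \<phi>
    unfolding G_def S_def using assms that by (intro coal_hist_caterpillar_map_iff) (auto simp: PiE_def)
  have "bij_betw (caterpillar_map n)
      {\<phi> \<in> {1..n-1} \<rightarrow>\<^sub>E {1..n-1}. (\<forall>j\<in>{1..n-1}. g ` {1..j+1} \<subseteq> s ` {1..\<phi> j + 1}) \<and>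
        (\<forall>i\<in>{1..n-1}. \<forall>j\<in>{1..n-1}. i \<le> j \<longrightarrow> \<phi> i \<le> \<phi> j)}
      {h \<in> caterpillar_node n ` {1..n-1} \<rightarrow>\<^sub>E caterpillar_node n ` {1..n-1}. coal_hist G S h}"
    using bij_betw_caterpillar_map by (rule bij_betw_Collect) (use history_iff in blast)
  then show ?thesis
    unfolding num_coal_hist_def G_def[symmetric] S_def[symmetric] internal
    by (rule bij_betw_same_card[symmetric])
qed

section \<open>Forward incrementations\<close>

lemma inj_on_image_subset_iff:
  "inj_on f C \<Longrightarrow> A \<subseteq> C \<Longrightarrow> B \<subseteq> C \<Longrightarrow> f ` A \<subseteq> f ` B \<longleftrightarrow> A \<subseteq> B"
proof
  assume "inj_on f C" "A \<subseteq> C" "B \<subseteq> C" "f ` A \<subseteq> f ` B"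
  then show "A \<subseteq> B"
    using inj_on_image_mem_iff[of f C _ B] by blast
qed blast

lemma image_subset_atLeastAtMost_iff_max:
  fixes f :: "'a \<Rightarrow> nat"
  assumes "x \<in> A" "f x = M" "\<And>k. k \<in> A \<Longrightarrow> l \<le> f k \<and> f k \<le> M"
  shows "f ` A \<subseteq> {l..h} \<longleftrightarrow> M \<le> h"
  using assms by (fastforce simp: image_subset_iff)

lemma forward_increment_image_subset_iff:
  fixes ks kl :: nat
  assumes "1 \<le> ks" "ks < kl"
  defines "\<pi> \<equiv> \<lambda>k. if k = ks then kl else if ks < k \<and> k \<le> kl then k - 1 else k"
  shows "\<pi> ` {1..j+1} \<subseteq> {1..h+1} \<longleftrightarrow> (if ks - 1 \<le> j \<and> j \<le> kl - 1 then kl - 1 else j) \<le> h"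
proof (cases "ks - 1 \<le> j \<and> j \<le> kl - 1")
  case True
  have "\<pi> ` {1..j+1} \<subseteq> {1..h+1} \<longleftrightarrow> kl \<le> h + 1"
  proof (rule image_subset_atLeastAtMost_iff_max)
    show "ks \<in> {1..j+1}" "\<pi> ks = kl" using assms True by auto
    show "1 \<le> \<pi> k \<and> \<pi> k \<le> kl" if "k \<in> {1..j+1}" for k
      using assms True that by auto
  qed
  with True show ?thesis by auto
next
  case False
  have "\<pi> ` {1..j+1} \<subseteq> {1..h+1} \<longleftrightarrow> j + 1 \<le> h + 1"
  proof (rule image_subset_atLeastAtMost_iff_max)
    show "j + 1 \<in> {1..j+1}" "\<pi> (j + 1) = j + 1" using assms False by auto
    show "1 \<le> \<pi> k \<and> \<pi> k \<le> j + 1" if "k \<in> {1..j+1}" for k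
      using assms False that by auto
  qed
  with False show ?thesis by auto
qed

lemma forward_increment_leaves_subset_iff:
  fixes n ks kl :: nat and s :: "nat \<Rightarrow> 'a"
  assumes "inj_on s {1..n}" "1 \<le> ks" "ks < kl" "kl \<le> n" "j \<le> n - 1" "t \<le> n - 1"
  defines "g \<equiv> \<lambda>k. if k = ks then s kl else if ks < k \<and> k \<le> kl then s (k - 1) else s k"
  shows "g ` {1..j+1} \<subseteq> s ` {1..t+1} \<longleftrightarrow> (if ks - 1 \<le> j \<and> j \<le> kl - 1 then kl - 1 else j) \<le> t"
proof -
  define \<pi> where "\<pi> = (\<lambda>k. if k = ks then kl else if ks < k \<and> k \<le> kl then k - 1 else (k :: nat))"
  have "g ` {1..j+1} = s ` (\<pi> ` {1..j+1})"
    by (force simp: g_def \<pi>_def)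
  moreover have "\<pi> ` {1..j+1} \<subseteq> {1..n}" "{1..t+1} \<subseteq> {1..n}"
    using assms(2-6) by (auto simp: \<pi>_def)
  ultimately have "g ` {1..j+1} \<subseteq> s ` {1..t+1} \<longleftrightarrow> \<pi> ` {1..j+1} \<subseteq> {1..t+1}"
    using inj_on_image_subset_iff[OF assms(1)] by presburger
  also have "\<dots> \<longleftrightarrow> (if ks - 1 \<le> j \<and> j \<le> kl - 1 then kl - 1 else j) \<le> t"
    unfolding \<pi>_def by (rule forward_increment_image_subset_iff[OF assms(2,3)])
  finally show ?thesis .
qed

lemma num_coal_hist_forward_increment:
  fixes n ks kl :: nat and s :: "nat \<Rightarrow> 'a"
  assumes "2 \<le> n" "inj_on s {1..n}" "1 \<le> ks" "ks < kl" "kl \<le> n"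
  defines "g \<equiv> \<lambda>k. if k = ks then s kl else if ks < k \<and> k \<le> kl then s (k - 1) else s k"
    and "m \<equiv> \<lambda>j. if ks - 1 \<le> j \<and> j \<le> kl - 1 then kl - 1 else j"
  shows "num_coal_hist (caterpillar (map g [1..<n+1])) (caterpillar (map s [1..<n+1])) =
    lattice_paths (\<lambda>x y. y = 0 \<or> m y \<le> x) 0 0 (n - 1) (n - 1)"
proof -
  have subset_iff: "g ` {1..j+1} \<subseteq> s ` {1..t+1} \<longleftrightarrow> m j \<le> t" if "j \<le> n - 1" "t \<le> n - 1" for j t
    unfolding g_def m_def using assms(2-5) that by (rule forward_increment_leaves_subset_iff)
  have m_pos: "1 \<le> m j" if "1 \<le> j" for j
    using that assms(4) by (auto simp: m_def)
  have "{\<phi> \<in> {1..n-1} \<rightarrow>\<^sub>E {1..n-1}. (\<forall>j\<in>{1..n-1}. g ` {1..j+1} \<subseteq> s ` {1..\<phi> j + 1}) \<and>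
      (\<forall>i\<in>{1..n-1}. \<forall>j\<in>{1..n-1}. i \<le> j \<longrightarrow> \<phi> i \<le> \<phi> j)} = mono_bounded_seqs m (n - 1) (n - 1)"
    (is "?\<Phi> = _")
  proof (intro equalityI subsetI)
    fix \<phi> assume \<phi>: "\<phi> \<in> ?\<Phi>"
    then have "\<phi> j \<le> n - 1" "m j \<le> \<phi> j" if "j \<in> {1..n-1}" for j
      using that subset_iff[of j "\<phi> j"] by (auto simp: PiE_iff)
    with \<phi> show "\<phi> \<in> mono_bounded_seqs m (n - 1) (n - 1)"
      by (auto simp: mono_bounded_seqs_def PiE_iff)
  next
    fix \<phi> assume \<phi>: "\<phi> \<in> mono_bounded_seqs m (n - 1) (n - 1)"
    then have "m j \<le> \<phi> j \<and> \<phi> j \<le> n - 1" if "j \<in> {1..n-1}" for j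
      using that by (auto simp: mono_bounded_seqs_def PiE_iff)
    then have "\<phi> j \<in> {1..n-1}" "g ` {1..j+1} \<subseteq> s ` {1..\<phi> j + 1}" if "j \<in> {1..n-1}" for j
      using that m_pos[of j] subset_iff[of j "\<phi> j"] by fastforce+
    with \<phi> show "\<phi> \<in> ?\<Phi>"
      by (auto simp: mono_bounded_seqs_def PiE_iff)
  qed
  then show ?thesis
    using num_coal_hist_caterpillar[OF assms(1), of g s] by (simp add: card_mono_bounded_seqs)
qed

theorem proposition9:
  fixes n ks kl :: nat and s :: "nat \<Rightarrow> 'a"
  assumes "n \<ge> 3" and "inj_on s {1..n}"
    and "1 \<le> ks" and "ks < kl" and "kl \<le> n" and "kl \<noteq> 2"
  defines "g \<equiv> (\<lambda>k. if k = ks then s kl else if ks < k \<and> k \<le> kl then s (k - 1) else s k)"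
    and "\<delta> \<equiv> (if ks = 1 then 1 else 0 :: nat)"
  shows "int (num_coal_hist (caterpillar (map g [1..<n+1])) (caterpillar (map s [1..<n+1])))
    = (\<Sum>c = 0..min (ks + \<delta> - 2) (n - kl).
         catD (kl - 1 + c) (ks + \<delta> - 2 - c)
         * catDm (kl + 2 + 2 * c - ks - \<delta>) (n - kl - c) (n + 1 + c - ks - \<delta>))"
proof -
  define a where "a = ks - 1 + \<delta>"
  have bounds: "1 \<le> a" "a \<le> kl - 1" "kl - 1 \<le> n - 1"
    using assms(3-5) by (auto simp: a_def \<delta>_def)
  have "(\<lambda>x y. y = 0 \<or> (if ks - 1 \<le> y \<and> y \<le> kl - 1 then kl - 1 else y) \<le> x) =
      (\<lambda>x y. if a \<le> y \<and> y \<le> kl - 1 then kl - 1 \<le> x else y \<le> x)"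
    using bounds by (auto simp: fun_eq_iff a_def \<delta>_def split: if_splits)
  then have "int (num_coal_hist (caterpillar (map g [1..<n+1])) (caterpillar (map s [1..<n+1]))) =
      int (lattice_paths (\<lambda>x y. if a \<le> y \<and> y \<le> kl - 1 then kl - 1 \<le> x else y \<le> x) 0 0 (n - 1) (n - 1))"
    using num_coal_hist_forward_increment[OF _ assms(2-5)] assms(3-5) by (simp add: g_def)
  also have "\<dots> = (\<Sum>c = 0..min (a - 1) (n - 1 - (kl - 1)).
      catD (kl - 1 + c) (a - 1 - c) * catDm (kl - 1 + 2 * c + 2 - a) (n - 1 - (kl - 1) - c) (n - 1 + 1 + c - a))"
    using bounds by (rule lattice_paths_plateau)
  also have "\<dots> = (\<Sum>c = 0..min (ks + \<delta> - 2) (n - kl).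
      catD (kl - 1 + c) (ks + \<delta> - 2 - c) * catDm (kl + 2 + 2 * c - ks - \<delta>) (n - kl - c) (n + 1 + c - ks - \<delta>))"
  proof -
    have "a - 1 = ks + \<delta> - 2" "n - 1 - (kl - 1) = n - kl"
      using assms(3-5) by (auto simp: a_def \<delta>_def)
    moreover have "kl - 1 + 2 * c + 2 - a = kl + 2 + 2 * c - ks - \<delta>"
      "n - 1 + 1 + c - a = n + 1 + c - ks - \<delta>" for c
      using assms(3-5) by (auto simp: a_def \<delta>_def)
    ultimately show ?thesis by (simp only: diff_diff_left)
  qed
  finally show ?thesis .
qed

end
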